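(* Let $F_n\colon[0,+\infty)^2\to[0,+\infty)$, $n=1,2,\dots$, be functions converging uniformly on compact sets to a continuous function $F$. Then the following are equivalent: (1) for every $s,t\ge0$, $\lim_{n\to\infty}\big(F_n(s,t)-\inf_{s\le s',\,t\le t'}F_n(s',t')\big)=0$; (2) for every $D>0$, $\lim_{n\to\infty}\sup_{0\le s,t\le D}\big(F_n(s,t)-\inf_{s\le s',\,t\le t'}F_n(s',t')\big)=0$. *)

theory Defs
  imports "HOL-Analysis.Analysis"
begin

end

theory Submission
  imports Defs
begin

(* For (s0, t0) \<le> (s, t) the defect of F_n at (s, t) exceeds the one at (s0, t0) by at most
   F_n (s, t) - F_n (s0, t0), since the infimum is taken over a smaller quadrant. Hence pointwise
   convergence of the defects on a finite grid lying below every point of [0, D]^2 at distance less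
   than the modulus of uniform continuity of F, combined with uniform convergence F_n \<rightarrow> F on the
   square, makes the defects uniformly small there. Conversely the defect at a point is bounded by
   the supremum over a square containing it; this supremum is a genuine bound because F_n is
   eventually bounded on the square. *)

(* With the componentwise order on pairs, {x..} is the quadrant {(s', t'). s \<le> s' \<and> t \<le> t'}
   above x = (s, t). *)
definition corner_defect :: "('a::order \<Rightarrow> real) \<Rightarrow> 'a \<Rightarrow> real" where
  "corner_defect f x = f x - Inf (f ` {x..})"

lemma corner_defect_Pair:
  "f (s, t) - Inf {f (s', t') | s' t'. s \<le> s' \<and> t \<le> t'} = corner_defect f (s, t)"
proof -
  have "{f (s', t') | s' t'. s \<le> s' \<and> t \<le> t'} = f ` {(s, t)..}"
    by (auto simp: image_iff) blast
  then show ?thesis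
    by (simp add: corner_defect_def)
qed

lemma corner_defect_nonneg:
  assumes "bdd_below (f ` {x..})"
  shows "0 \<le> corner_defect f x"
  using cInf_lower[OF _ assms, of "f x"] by (simp add: corner_defect_def)

lemma corner_defect_le:
  assumes "\<And>y. x \<le> y \<Longrightarrow> 0 \<le> f y"
  shows "corner_defect f x \<le> f x"
proof -
  have "0 \<le> Inf (f ` {x..})"
    by (rule cInf_greatest) (auto intro: assms)
  then show ?thesis
    by (simp add: corner_defect_def)
qed

lemma corner_defect_le_corner_defect:
  assumes "x \<le> y" and "bdd_below (f ` {x..})"
  shows "corner_defect f y \<le> f y - f x + corner_defect f x"
proof -
  have "Inf (f ` {x..}) \<le> Inf (f ` {y..})"
    using assms by (intro cInf_superset_mono) auto
  then show ?thesis
    by (simp add: corner_defect_def)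
qed

lemma finite_lower_net_interval:
  fixes a b \<delta> :: real
  assumes "0 < \<delta>"
  obtains P where "finite P" "P \<subseteq> {a..b}" "\<And>y. y \<in> {a..b} \<Longrightarrow> \<exists>x\<in>P. x \<le> y \<and> y - x < \<delta>"
proof
  define grid where "grid k = a + real k * \<delta>" for k
  define P where "P = {a..b} \<inter> grid ` {..nat \<lceil>(b - a) / \<delta>\<rceil>}"
  show "finite P" "P \<subseteq> {a..b}"
    by (auto simp: P_def)
  fix y assume y: "y \<in> {a..b}"
  define k where "k = nat \<lfloor>(y - a) / \<delta>\<rfloor>"
  have k: "real k \<le> (y - a) / \<delta>" "(y - a) / \<delta> < real k + 1"
    using y assms by (auto simp: k_def divide_nonneg_pos)
  then have "a \<le> grid k" "grid k \<le> y" "y - grid k < \<delta>"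
    using assms by (auto simp: grid_def field_simps)
  moreover have "k \<le> nat \<lceil>(b - a) / \<delta>\<rceil>"
    using y assms unfolding k_def
    by (intro nat_mono order.trans[OF floor_le_ceiling ceiling_mono] divide_right_mono) auto
  ultimately show "\<exists>x\<in>P. x \<le> y \<and> y - x < \<delta>"
    using y by (intro bexI[of _ "grid k"]) (auto simp: P_def)
qed

lemma finite_lower_net_box:
  fixes a b :: "real \<times> real"
  assumes "0 < \<delta>"
  obtains P where "finite P" "P \<subseteq> {a..b}" "\<And>y. y \<in> {a..b} \<Longrightarrow> \<exists>x\<in>P. x \<le> y \<and> dist x y < \<delta>"
proof -
  have half: "0 < \<delta> / 2"
    using assms by simp
  obtain P1 where P1: "finite P1" "P1 \<subseteq> {fst a..fst b}"
    "\<And>y. y \<in> {fst a..fst b} \<Longrightarrow> \<exists>x\<in>P1. x \<le> y \<and> y - x < \<delta> / 2"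
    by (rule finite_lower_net_interval[OF half]) blast
  obtain P2 where P2: "finite P2" "P2 \<subseteq> {snd a..snd b}"
    "\<And>y. y \<in> {snd a..snd b} \<Longrightarrow> \<exists>x\<in>P2. x \<le> y \<and> y - x < \<delta> / 2"
    by (rule finite_lower_net_interval[OF half]) blast
  have "\<exists>x\<in>P1 \<times> P2. x \<le> (y1, y2) \<and> dist x (y1, y2) < \<delta>" if "(y1, y2) \<in> {a..b}" for y1 y2
  proof -
    have "y1 \<in> {fst a..fst b}" "y2 \<in> {snd a..snd b}"
      using that by (auto simp: atLeastAtMost_prod_eq)
    then obtain x1 x2 where x: "x1 \<in> P1" "x1 \<le> y1" "y1 - x1 < \<delta> / 2" "x2 \<in> P2" "x2 \<le> y2" "y2 - x2 < \<delta> / 2"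
      using P1(3) P2(3) by blast
    have "dist (x1, x2) (y1, y2) \<le> \<bar>x1 - y1\<bar> + \<bar>x2 - y2\<bar>"
      using sqrt_sum_squares_le_sum_abs by (simp add: dist_Pair_Pair dist_real_def)
    also have "\<dots> < \<delta>"
      using x by linarith
    finally show ?thesis
      using x by (intro bexI[of _ "(x1, x2)"]) auto
  qed
  moreover have "finite (P1 \<times> P2)" "P1 \<times> P2 \<subseteq> {a..b}"
    using P1 P2 by (auto simp: atLeastAtMost_prod_eq)
  ultimately show ?thesis
    using that[of "P1 \<times> P2"] by auto
qed

lemma uniform_limit_eventually_bounded:
  fixes f :: "'i \<Rightarrow> 'a \<Rightarrow> 'b::real_normed_vector"
  assumes "uniform_limit K f g F" and "bounded (g ` K)"
  shows "\<forall>\<^sub>F n in F. bounded (f n ` K)"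
proof -
  obtain B where B: "\<And>x. x \<in> K \<Longrightarrow> norm (g x) \<le> B"
    using assms(2) by (auto simp: bounded_iff)
  have "\<forall>\<^sub>F n in F. \<forall>x\<in>K. dist (f n x) (g x) < 1"
    using assms(1) by (simp add: uniform_limit_iff)
  then show ?thesis
  proof eventually_elim
    case (elim n)
    have "norm (f n x) \<le> B + 1" if "x \<in> K" for x
      using B[OF that] elim that norm_triangle_ineq2[of "f n x" "g x"]
      by (fastforce simp: dist_norm)
    then show ?case
      by (auto simp: bounded_iff)
  qed
qed

lemma corner_defect_tendsto_zero_if_Sup_tendsto_zero:
  fixes Fs :: "nat \<Rightarrow> 'a::{order,topological_space} \<Rightarrow> real"
  assumes nonneg: "\<And>n y. a \<le> y \<Longrightarrow> 0 \<le> Fs n y"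
    and "compact K" and "K \<subseteq> {a..}"
    and unif: "uniform_limit K Fs F sequentially" and cont: "continuous_on K F"
    and "x \<in> K"
    and Sup: "(\<lambda>n. Sup (corner_defect (Fs n) ` K)) \<longlonglongrightarrow> 0"
  shows "(\<lambda>n. corner_defect (Fs n) x) \<longlonglongrightarrow> 0"
proof (rule tendsto_sandwich[OF _ _ tendsto_const Sup])
  have nonneg_above: "0 \<le> Fs n z" if "y \<in> K" "y \<le> z" for n y z
  proof -
    have "a \<le> y"
      using that(1) \<open>K \<subseteq> {a..}\<close> by auto
    then show ?thesis
      using nonneg order.trans that(2) by blast
  qed
  show "\<forall>\<^sub>F n in sequentially. 0 \<le> corner_defect (Fs n) x"
    using \<open>x \<in> K\<close> nonneg_above
    by (intro always_eventually allI corner_defect_nonneg bdd_belowI2[where m = 0]) auto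
  have "bounded (F ` K)"
    by (rule compact_imp_bounded[OF compact_continuous_image[OF cont \<open>compact K\<close>]])
  with unif have "\<forall>\<^sub>F n in sequentially. bounded (Fs n ` K)"
    by (rule uniform_limit_eventually_bounded)
  then show "\<forall>\<^sub>F n in sequentially. corner_defect (Fs n) x \<le> Sup (corner_defect (Fs n) ` K)"
  proof eventually_elim
    case (elim n)
    then obtain M where M: "\<And>y. y \<in> K \<Longrightarrow> Fs n y \<le> M"
      using bounded_imp_bdd_above[OF elim] by (auto simp: bdd_above_def)
    have "corner_defect (Fs n) y \<le> M" if "y \<in> K" for y
    proof -
      have "corner_defect (Fs n) y \<le> Fs n y"
        by (rule corner_defect_le) (rule nonneg_above[OF that])
      then show ?thesis
        using M[OF that] by linarith
    qed
    then have "bdd_above (corner_defect (Fs n) ` K)"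
      by (rule bdd_aboveI2)
    then show ?case
      using \<open>x \<in> K\<close> by (intro cSup_upper) auto
  qed
qed

lemma Sup_corner_defect_tendsto_zero:
  fixes Fs :: "nat \<Rightarrow> real \<times> real \<Rightarrow> real" and a b :: "real \<times> real"
  assumes nonneg: "\<And>n y. a \<le> y \<Longrightarrow> 0 \<le> Fs n y" and "a \<le> b"
    and unif: "uniform_limit {a..b} Fs F sequentially" and cont: "continuous_on {a..b} F"
    and pointwise: "\<And>x. x \<in> {a..b} \<Longrightarrow> (\<lambda>n. corner_defect (Fs n) x) \<longlonglongrightarrow> 0"
  shows "(\<lambda>n. Sup (corner_defect (Fs n) ` {a..b})) \<longlonglongrightarrow> 0"
proof (rule tendstoI)
  fix e :: real assume "0 < e"
  then have e: "0 < e / 5" by simp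
  have bdd: "bdd_below (Fs n ` {x..})" if "x \<in> {a..b}" for n x
    using that by (intro bdd_belowI2[where m = 0] nonneg) (auto intro: order.trans)
  have "compact {a..b}"
    by (simp add: atLeastAtMost_prod_eq compact_Times)
  then obtain d where "0 < d"
    and d: "\<And>x y. x \<in> {a..b} \<Longrightarrow> y \<in> {a..b} \<Longrightarrow> dist y x < d \<Longrightarrow> dist (F y) (F x) < e / 5"
    using compact_uniformly_continuous[OF cont] e unfolding uniformly_continuous_on_def by metis
  obtain P where P: "finite P" "P \<subseteq> {a..b}" "\<And>y. y \<in> {a..b} \<Longrightarrow> \<exists>x\<in>P. x \<le> y \<and> dist x y < d"
    by (rule finite_lower_net_box[OF \<open>0 < d\<close>]) blast
  have "\<forall>\<^sub>F n in sequentially. \<forall>x\<in>P. corner_defect (Fs n) x < e / 5"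
    using P(2) e by (intro eventually_ball_finite[OF P(1)] ballI order_tendstoD(2)[OF pointwise]) auto
  moreover have "\<forall>\<^sub>F n in sequentially. \<forall>y\<in>{a..b}. dist (Fs n y) (F y) < e / 5"
    using unif e unfolding uniform_limit_iff by blast
  ultimately show "\<forall>\<^sub>F n in sequentially. dist (Sup (corner_defect (Fs n) ` {a..b})) 0 < e"
  proof eventually_elim
    case (elim n)
    have "corner_defect (Fs n) y \<le> 4 * (e / 5)" if y: "y \<in> {a..b}" for y
    proof -
      obtain x where "x \<in> P" "x \<le> y" "dist x y < d"
        using P(3) y by blast
      then have x: "x \<in> {a..b}"
        using P(2) by auto
      have "corner_defect (Fs n) y \<le> Fs n y - Fs n x + corner_defect (Fs n) x"
        using corner_defect_le_corner_defect[OF \<open>x \<le> y\<close> bdd[OF x]] .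
      moreover have "dist (F y) (F x) < e / 5"
        using d[OF x y] \<open>dist x y < d\<close> by (simp add: dist_commute)
      moreover have "dist (Fs n y) (F y) < e / 5" "dist (Fs n x) (F x) < e / 5"
        using elim(2) x y by auto
      moreover have "corner_defect (Fs n) x < e / 5"
        using elim(1) \<open>x \<in> P\<close> by auto
      ultimately show ?thesis
        unfolding dist_real_def abs_less_iff by linarith
    qed
    moreover have "0 \<le> corner_defect (Fs n) y" if "y \<in> {a..b}" for y
      using corner_defect_nonneg[OF bdd[OF that]] .
    ultimately have "\<bar>Sup (corner_defect (Fs n) ` {a..b})\<bar> \<le> 4 * (e / 5)"
      using \<open>a \<le> b\<close> by (intro cSup_abs_le) auto
    then show ?case
      using \<open>0 < e\<close> by simp
  qed
qed

theorem mainTheorem17: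
  fixes Fs :: "nat \<Rightarrow> real \<times> real \<Rightarrow> real" and F :: "real \<times> real \<Rightarrow> real"
  assumes nonneg: "\<And>n s t. s \<ge> 0 \<Longrightarrow> t \<ge> 0 \<Longrightarrow> Fs n (s, t) \<ge> 0"
    and unif: "\<And>K. compact K \<Longrightarrow> K \<subseteq> {0..} \<times> {0..} \<Longrightarrow> uniform_limit K Fs F sequentially"
    and cont: "continuous_on ({0..} \<times> {0..}) F"
  shows "(\<forall>s t. s \<ge> 0 \<longrightarrow> t \<ge> 0 \<longrightarrow>
            ((\<lambda>n. Fs n (s, t) - Inf {Fs n (s', t') | s' t'. s \<le> s' \<and> t \<le> t'}) \<longlonglongrightarrow> 0))
     \<longleftrightarrow>
         (\<forall>D > 0. ((\<lambda>n. Sup {Fs n (s, t) - Inf {Fs n (s', t') | s' t'. s \<le> s' \<and> t \<le> t'} | s t.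
                          0 \<le> s \<and> s \<le> D \<and> 0 \<le> t \<and> t \<le> D}) \<longlonglongrightarrow> 0))"
proof -
  have square: "{corner_defect f (s, t) | s t. 0 \<le> s \<and> s \<le> D \<and> 0 \<le> t \<and> t \<le> D}
      = corner_defect f ` {(0, 0)..(D, D)}" for f :: "real \<times> real \<Rightarrow> real" and D :: real
    by (auto simp: image_iff) blast
  have nonneg_quadrant: "0 \<le> Fs n y" if "(0, 0) \<le> y" for n y
    using nonneg[of "fst y" "snd y"] that by (simp add: less_eq_prod_def)
  have unif_box: "uniform_limit {(0, 0)..(D, D)} Fs F sequentially" for D :: real
    by (intro unif) (auto simp: atLeastAtMost_prod_eq compact_Times)
  have cont_box: "continuous_on {(0, 0)..(D, D)} F" for D :: real
    by (rule continuous_on_subset[OF cont]) (auto simp: atLeastAtMost_prod_eq)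
  show ?thesis
    unfolding corner_defect_Pair square
  proof
    assume pointwise: "\<forall>s t. 0 \<le> s \<longrightarrow> 0 \<le> t \<longrightarrow> (\<lambda>n. corner_defect (Fs n) (s, t)) \<longlonglongrightarrow> 0"
    show "\<forall>D > 0. (\<lambda>n. Sup (corner_defect (Fs n) ` {(0, 0)..(D, D)})) \<longlonglongrightarrow> 0"
      using pointwise
      by (intro allI impI Sup_corner_defect_tendsto_zero[OF nonneg_quadrant _ unif_box cont_box])
        (auto simp: less_eq_prod_def)
  next
    assume uniform: "\<forall>D > 0. (\<lambda>n. Sup (corner_defect (Fs n) ` {(0, 0)..(D, D)})) \<longlonglongrightarrow> 0"
    show "\<forall>s t. 0 \<le> s \<longrightarrow> 0 \<le> t \<longrightarrow> (\<lambda>n. corner_defect (Fs n) (s, t)) \<longlonglongrightarrow> 0"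
    proof (intro allI impI)
      fix s t :: real assume "0 \<le> s" "0 \<le> t"
      define D where "D = max s t + 1"
      then show "(\<lambda>n. corner_defect (Fs n) (s, t)) \<longlonglongrightarrow> 0"
        using uniform[rule_format, of D] \<open>0 \<le> s\<close> \<open>0 \<le> t\<close>
        by (intro corner_defect_tendsto_zero_if_Sup_tendsto_zero
            [OF nonneg_quadrant _ _ unif_box[of D] cont_box[of D]])
          (auto simp: atLeastAtMost_prod_eq compact_Times)
    qed
  qed
qed

end
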